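(* Let $\mathcal G$ be an input-output network with input nodes $\iota_1,\dots,\iota_n$ and output node $o$, with the other nodes partitioned into $\sigma$-nodes (upstream from $o$ and downstream from at least one input node), $d$-nodes (not downstream from any input node) and $u$-nodes (downstream from at least one input node but not upstream from $o$). Consider an admissible system $$\dot x_{\iota_m}=f_{\iota_m}(x_{\iota},x_\sigma,x_d,x_o,\mathcal I),\quad \dot x_\sigma=f_\sigma(x_\iota,x_\sigma,x_d,x_o),\quad \dot x_u=f_u(x_\iota,x_\sigma,x_u,x_d,x_o),\quad \dot x_d=f_d(x_d),\quad \dot x_o=f_o(x_\iota,x_\sigma,x_d,x_o)$$ with a smooth family of linearly stable equilibria $\tilde X(\mathcal I)$ near $\mathcal I_0$, whose $d$-component is $x_d^*$ and whose output component is the input-output function $x_o(\mathcal I)$. Let $x_o^c(\mathcal I)$ be the input-output function (output component of the corresponding family of linearly stable equilibria) of the associated core admissible system obtained by freezing $x_d$ at $x_d^*$: $$\dot x_{\iota_m}=f_{\iota_m}(x_\iota,x_\sigma,x_d^*,x_o,\mathcal I),\quad \dot x_\sigma=f_\sigma(x_\iota,x_\sigma,x_d^*,x_o),\quad \dot x_o=f_o(x_\iota,x_\sigma,x_d^*,x_o).$$ Then $x_o^c$ has a point of infinitesimal homeostasis at $\mathcal I_0$ (i.e. $(x_o^c)'(\mathcal I_0)=0$) if and only if $x_o$ has a point of infinitesimal homeostasis at $\mathcal I_0$ (i.e. $x_o'(\mathcal I_0)=0$).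
   Context: A node $b$ is downstream from $a$ (and $a$ upstream from $b$) if there is a directed path from $a$ to $b$; every node is upstream and downstream from itself. An admissible system assigns a real variable to each node, is smooth, only the input-node equations depend on the scalar input parameter $\mathcal I$, $\partial f_{\iota_m}/\partial\mathcal I\neq0$, and $\partial f_j/\partial x_\ell\equiv0$ unless there is an arrow $\ell\to j$. An equilibrium is linearly stable if all eigenvalues of the Jacobian there have negative real part. *)

theory Defs
  imports "HOL-Analysis.Analysis"
begin

text \<open>Nodes are the elements of a finite type 'n; arrows are a relation E;
  b is downstream from a iff (a,b) is in the reflexive transitive closure of E.\<close>

definition downstream :: "('n \<times> 'n) set \<Rightarrow> 'n \<Rightarrow> 'n \<Rightarrow> bool" where
  "downstream E a b \<longleftrightarrow> (a, b) \<in> E\<^sup>*"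

definition io_network :: "'n set \<Rightarrow> 'n \<Rightarrow> ('n \<times> 'n) set \<Rightarrow> bool" where
  "io_network Inp out E \<longleftrightarrow> Inp \<noteq> {} \<and> out \<notin> Inp \<and> (\<forall>i\<in>Inp. downstream E i out)"

definition sigma_nodes :: "'n set \<Rightarrow> 'n \<Rightarrow> ('n \<times> 'n) set \<Rightarrow> 'n set" where
  "sigma_nodes Inp out E = {j. j \<notin> Inp \<and> j \<noteq> out \<and> downstream E j out \<and>
                              (\<exists>i\<in>Inp. downstream E i j)}"

definition d_nodes :: "'n set \<Rightarrow> 'n \<Rightarrow> ('n \<times> 'n) set \<Rightarrow> 'n set" where
  "d_nodes Inp out E = {j. j \<notin> Inp \<and> j \<noteq> out \<and> (\<forall>i\<in>Inp. \<not> downstream E i j)}"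

definition u_nodes :: "'n set \<Rightarrow> 'n \<Rightarrow> ('n \<times> 'n) set \<Rightarrow> 'n set" where
  "u_nodes Inp out E = {j. j \<notin> Inp \<and> j \<noteq> out \<and> \<not> downstream E j out \<and>
                          (\<exists>i\<in>Inp. downstream E i j)}"

definition core_nodes :: "'n set \<Rightarrow> 'n \<Rightarrow> ('n \<times> 'n) set \<Rightarrow> 'n set" where
  "core_nodes Inp out E = Inp \<union> sigma_nodes Inp out E \<union> {out}"

definition dirderiv :: "('a::real_normed_vector \<Rightarrow> real) \<Rightarrow> 'a \<Rightarrow> 'a \<Rightarrow> real" where
  "dirderiv g v = (\<lambda>x. frechet_derivative g (at x) v)"

fun iter_dirderiv :: "'a list \<Rightarrow> ('a::real_normed_vector \<Rightarrow> real) \<Rightarrow> 'a \<Rightarrow> real" where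
  "iter_dirderiv [] g = g"
| "iter_dirderiv (v # vs) g = dirderiv (iter_dirderiv vs g) v"

definition smooth_on :: "'a::real_normed_vector set \<Rightarrow> ('a \<Rightarrow> real) \<Rightarrow> bool" where
  "smooth_on U g \<longleftrightarrow> (\<forall>vs. \<forall>x\<in>U. iter_dirderiv vs g differentiable (at x))"

text \<open>A system is f :: 'n => real^'n => real => real, f j x I being the
  right-hand side of the equation for node j at state x and input parameter I.\<close>

definition upd :: "real^'n \<Rightarrow> 'n \<Rightarrow> real \<Rightarrow> real^'n" where
  "upd x l t = (\<chi> i. if i = l then t else x $ i)"

definition jac :: "('n \<Rightarrow> real^'n \<Rightarrow> real \<Rightarrow> real) \<Rightarrow> real^'n \<Rightarrow> real \<Rightarrow> real^'n^'n" where
  "jac f x I = (\<chi> j l. deriv (\<lambda>t. f j (upd x l t) I) (x $ l))"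

text \<open>Complex eigenvalue of the principal submatrix of A indexed by S.\<close>
definition sub_eigenvalue :: "'n set \<Rightarrow> real^'n^'n \<Rightarrow> complex \<Rightarrow> bool" where
  "sub_eigenvalue S A \<mu> \<longleftrightarrow>
     (\<exists>v :: 'n \<Rightarrow> complex. (\<exists>i\<in>S. v i \<noteq> 0) \<and>
        (\<forall>j\<in>S. (\<Sum>l\<in>S. complex_of_real (A $ j $ l) * v l) = \<mu> * v j))"

definition linearly_stable :: "'n set \<Rightarrow> real^'n^'n \<Rightarrow> bool" where
  "linearly_stable S A \<longleftrightarrow> (\<forall>\<mu>. sub_eigenvalue S A \<mu> \<longrightarrow> Re \<mu> < 0)"

definition admissible ::
  "'n set \<Rightarrow> ('n \<times> 'n) set \<Rightarrow> ('n \<Rightarrow> real^'n \<Rightarrow> real \<Rightarrow> real) \<Rightarrow> bool" where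
  "admissible Inp E f \<longleftrightarrow>
     (\<forall>j. smooth_on UNIV (\<lambda>p. f j (fst p) (snd p))) \<and>
     (\<forall>j. j \<notin> Inp \<longrightarrow> (\<forall>x I I'. f j x I = f j x I')) \<and>
     (\<forall>i\<in>Inp. \<forall>x I. deriv (\<lambda>J. f i x J) I \<noteq> 0) \<and>
     (\<forall>j l. l \<noteq> j \<and> (l, j) \<notin> E \<longrightarrow>
        (\<forall>x I. deriv (\<lambda>t. f j (upd x l t) I) (x $ l) = 0))"

definition freeze :: "'n set \<Rightarrow> real^'n \<Rightarrow> real^'n \<Rightarrow> real^'n" where
  "freeze D xs y = (\<chi> i. if i \<in> D then xs $ i else y $ i)"

end

theory Submission
  imports Defs
begin

text \<open>Differentiating the equilibrium equations at I0 gives J X'(I0) = - d/dI f, where J is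
  the Jacobian at X(I0), and the same equations on the core rows for the derivative of the core
  family (extended by zero off the core). A d-node is not downstream of any input, so its
  predecessors are d-nodes and its equation does not involve I: the d-rows form a homogeneous
  system in the d-coordinates alone. As J is block triangular with respect to the d-nodes and
  nonsingular by stability, its d-block is nonsingular, so X'(I0) vanishes on the d-nodes.
  The core rows involve only core and d coordinates, and on the core coordinates J agrees with
  the Jacobian of the core system, which is nonsingular by stability. Hence the two
  derivatives agree on the core, in particular at the output.\<close>

lemma upd_nth [simp]: "upd x l t $ i = (if i = l then t else x $ i)"
  by (simp add: upd_def)

lemma upd_same [simp]: "upd x l (x $ l) = x"
  by (simp add: vec_eq_iff)

lemma upd_upd [simp]: "upd (upd x l s) l t = upd x l t"
  by (simp add: vec_eq_iff)

lemma freeze_nth [simp]: "freeze D xs y $ i = (if i \<in> D then xs $ i else y $ i)"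
  by (simp add: freeze_def)

lemma matrix_vector_mult_nth: "(A *v x) $ j = (\<Sum>l\<in>UNIV. A $ j $ l * x $ l)"
  by (simp add: matrix_vector_mult_def)

lemma smooth_on_imp_differentiable:
  assumes "smooth_on U g" and "x \<in> U"
  shows "g differentiable (at x)"
proof -
  have "iter_dirderiv [] g differentiable (at x)"
    using assms unfolding smooth_on_def by blast
  then show ?thesis
    by simp
qed

lemma admissibleD:
  assumes "admissible Inp E f"
  shows admissible_smooth: "smooth_on UNIV (\<lambda>p. f j (fst p) (snd p))"
    and admissible_non_input: "j \<notin> Inp \<Longrightarrow> f j x I = f j x I'"
    and admissible_nonpredecessor:
      "l \<noteq> j \<Longrightarrow> (l, j) \<notin> E \<Longrightarrow> deriv (\<lambda>t. f j (upd x l t) I) (x $ l) = 0"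
  using assms unfolding admissible_def by simp_all

lemma admissible_differentiable:
  assumes "admissible Inp E f"
  shows "(\<lambda>p. f j (fst p) (snd p)) differentiable (at q)"
  using admissible_smooth[OF assms] by (rule smooth_on_imp_differentiable) simp

lemma has_field_derivative_along_line:
  assumes "(g has_derivative g') (at p)"
  shows "((\<lambda>t. g (p + (t - t0) *\<^sub>R v)) has_field_derivative g' v) (at t0)"
proof -
  have "((\<lambda>t. p + (t - t0) *\<^sub>R v) has_derivative (\<lambda>h. h *\<^sub>R v)) (at t0)"
    by (auto intro!: derivative_eq_intros)
  from has_derivative_compose[OF this, of g g'] assms
  have "((\<lambda>t. g (p + (t - t0) *\<^sub>R v)) has_derivative (\<lambda>h. g' (h *\<^sub>R v))) (at t0)"
    by simp
  moreover have "(\<lambda>h. g' (h *\<^sub>R v)) = (*) (g' v)"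
    using linear_scale[OF has_derivative_linear[OF assms]] by (auto simp: mult.commute)
  ultimately show ?thesis
    by (simp add: has_field_derivative_def)
qed

lemma has_field_derivative_coordinate:
  fixes I :: real
  assumes "((\<lambda>p. g (fst p) (snd p)) has_derivative g') (at (x, I))"
  shows "((\<lambda>t. g (upd x l t) I) has_field_derivative g' (axis l 1, 0)) (at (x $ l))"
proof -
  have line: "(x, I) + (t - x $ l) *\<^sub>R (axis l 1, 0) = (upd x l t, I)" for t
    by (simp add: prod_eq_iff vec_eq_iff axis_def)
  from has_field_derivative_along_line[OF assms, of "x $ l" "(axis l 1, 0)"] show ?thesis
    by (simp only: line fst_conv snd_conv)
qed

lemma has_field_derivative_parameter:
  fixes I :: real
  assumes "((\<lambda>p. g (fst p) (snd p)) has_derivative g') (at (x, I))"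
  shows "((\<lambda>J. g x J) has_field_derivative g' (0, 1)) (at I)"
proof -
  have line: "(x, I) + (J - I) *\<^sub>R (0, 1) = (x, J)" for J
    by (simp add: prod_eq_iff)
  from has_field_derivative_along_line[OF assms, of I "(0, 1)"] show ?thesis
    by (simp only: line fst_conv snd_conv)
qed

lemma vec_eq_sum_axis: "(\<Sum>l\<in>UNIV. x $ l *\<^sub>R axis l (1::real)) = x"
  using basis_expansion[of x] by (simp add: scalar_mult_eq_scaleR)

lemma has_derivative_vec_componentwise:
  fixes Z :: "real \<Rightarrow> real^'n"
  assumes "\<And>l. ((\<lambda>I. Z I $ l) has_field_derivative z l) (at I0)"
  shows "(Z has_derivative (\<lambda>h. h *\<^sub>R (\<Sum>l\<in>UNIV. z l *\<^sub>R axis l 1))) (at I0)"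
proof -
  have "((\<lambda>I. \<Sum>l\<in>UNIV. Z I $ l *\<^sub>R axis l 1) has_derivative
      (\<lambda>h. \<Sum>l\<in>UNIV. (z l * h) *\<^sub>R axis l (1::real))) (at I0)"
    by (intro has_derivative_sum has_derivative_scaleR_left assms[unfolded has_field_derivative_def])
  then show ?thesis
    by (simp only: vec_eq_sum_axis scaleR_sum_right scaleR_scaleR mult.commute)
qed

lemma has_field_derivative_along_curve:
  fixes Z :: "real \<Rightarrow> real^'n" and I0 :: real
  assumes g: "((\<lambda>p. g (fst p) (snd p)) has_derivative g') (at (Z I0, I0))"
    and Z: "\<And>l. ((\<lambda>I. Z I $ l) has_field_derivative z l) (at I0)"
  shows "((\<lambda>I. g (Z I) I) has_field_derivative
      (\<Sum>l\<in>UNIV. z l * g' (axis l 1, 0)) + g' (0, 1)) (at I0)"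
proof -
  have lin: "linear g'"
    using g by (rule has_derivative_linear)
  define v where "v = (\<Sum>l\<in>UNIV. z l *\<^sub>R axis l (1::real))"
  have "((\<lambda>I. (Z I, I)) has_derivative (\<lambda>h. h *\<^sub>R (v, 1))) (at I0)"
    using has_derivative_Pair[OF has_derivative_vec_componentwise[OF Z] has_derivative_ident]
    by (simp add: v_def)
  from has_derivative_compose[OF this g]
  have "((\<lambda>I. g (Z I) I) has_derivative (\<lambda>h. g' (h *\<^sub>R (v, 1)))) (at I0)"
    by simp
  moreover have "(\<lambda>h. g' (h *\<^sub>R (v, 1))) = (*) (g' (v, 1))"
  proof
    fix h :: real
    show "g' (h *\<^sub>R (v, 1)) = g' (v, 1) * h"
      using linear_scale[OF lin, of h "(v, 1)"] by (simp only: real_scaleR_def mult.commute)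
  qed
  moreover have "g' (v, 1) = (\<Sum>l\<in>UNIV. z l * g' (axis l 1, 0)) + g' (0, 1)"
  proof -
    have "(v, 1::real) = (\<Sum>l\<in>UNIV. z l *\<^sub>R (axis l 1, 0)) + (0, 1)"
      by (simp add: v_def prod_eq_iff fst_sum snd_sum)
    then have "g' (v, 1) = (\<Sum>l\<in>UNIV. g' (z l *\<^sub>R (axis l 1, 0))) + g' (0, 1)"
      by (simp only: linear_add[OF lin] linear_sum[OF lin] o_def)
    then show ?thesis
      by (simp only: linear_scale[OF lin] real_scaleR_def)
  qed
  ultimately show ?thesis
    by (simp add: has_field_derivative_def)
qed

lemma equilibrium_curve_derivative:
  fixes Z :: "real \<Rightarrow> real^'n"
  assumes F: "(\<lambda>p. f j (fst p) (snd p)) differentiable (at (Z I0, I0))"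
    and Z: "\<And>l. ((\<lambda>I. Z I $ l) has_field_derivative z l) (at I0)"
    and S: "open S" "I0 \<in> S"
    and equilibrium: "\<And>I. I \<in> S \<Longrightarrow> f j (Z I) I = 0"
  shows "(\<Sum>l\<in>UNIV. jac f (Z I0) I0 $ j $ l * z l) + deriv (\<lambda>J. f j (Z I0) J) I0 = 0"
proof -
  obtain F' where F': "((\<lambda>p. f j (fst p) (snd p)) has_derivative F') (at (Z I0, I0))"
    using F unfolding differentiable_def by blast
  have "((\<lambda>I. f j (Z I) I) has_field_derivative
      (\<Sum>l\<in>UNIV. z l * F' (axis l 1, 0)) + F' (0, 1)) (at I0)"
    by (rule has_field_derivative_along_curve[OF F' Z])
  moreover have "((\<lambda>I. f j (Z I) I) has_field_derivative 0) (at I0)"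
    by (rule has_field_derivative_transform_within_open[OF DERIV_const S]) (simp add: equilibrium)
  ultimately have "(\<Sum>l\<in>UNIV. z l * F' (axis l 1, 0)) + F' (0, 1) = 0"
    by (rule DERIV_unique)
  moreover have "jac f (Z I0) I0 $ j $ l = F' (axis l 1, 0)" for l
    using DERIV_imp_deriv[OF has_field_derivative_coordinate[OF F', of l]] by (simp add: jac_def)
  moreover have "deriv (\<lambda>J. f j (Z I0) J) I0 = F' (0, 1)"
    using DERIV_imp_deriv[OF has_field_derivative_parameter[OF F']] .
  ultimately show ?thesis
    by (simp add: mult.commute)
qed

lemma jac_nonpredecessor:
  assumes "admissible Inp E f" and "l \<noteq> j" and "(l, j) \<notin> E"
  shows "jac f x I $ j $ l = 0"
  using admissible_nonpredecessor[OF assms] by (simp add: jac_def)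

lemma deriv_parameter_non_input:
  assumes "admissible Inp E f" and "j \<notin> Inp"
  shows "deriv (\<lambda>J. f j x J) I = 0"
proof -
  have "deriv (\<lambda>J. f j x J) I = deriv (\<lambda>_. f j x I) I"
    by (rule arg_cong[where f = "\<lambda>g. deriv g I"]) (intro ext admissible_non_input[OF assms])
  then show ?thesis
    by simp
qed

lemma admissible_upd_nonpredecessor:
  assumes adm: "admissible Inp E f" and "l \<noteq> j" and "(l, j) \<notin> E"
  shows "f j (upd x l t) I = f j x I"
proof -
  have "((\<lambda>t. f j (upd x l t) I) has_field_derivative 0) (at s within UNIV)" for s
  proof -
    obtain F' where F': "((\<lambda>p. f j (fst p) (snd p)) has_derivative F') (at (upd x l s, I))"
      using admissible_differentiable[OF adm] unfolding differentiable_def by blast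
    have D: "((\<lambda>t. f j (upd x l t) I) has_field_derivative F' (axis l 1, 0)) (at s)"
      using has_field_derivative_coordinate[OF F', of l] by simp
    have "deriv (\<lambda>t. f j (upd (upd x l s) l t) I) (upd x l s $ l) = 0"
      using admissible_nonpredecessor[OF assms] by blast
    then have "F' (axis l 1, 0) = 0"
      using DERIV_imp_deriv[OF D] by simp
    then show ?thesis
      using D by simp
  qed
  then obtain c where "\<forall>t\<in>UNIV. f j (upd x l t) I = c"
    using has_field_derivative_zero_constant[OF convex_UNIV, of "\<lambda>t. f j (upd x l t) I"]
    by blast
  then show ?thesis
    by (metis UNIV_I upd_same)
qed

lemma admissible_eq_if_agree_on_predecessors:
  assumes adm: "admissible Inp E f"
    and agree: "\<And>l. l = j \<or> (l, j) \<in> E \<Longrightarrow> x $ l = y $ l"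
  shows "f j x I = f j y I"
proof -
  have step: "f j x I = f j y I"
    if "finite D" "{l. x $ l \<noteq> y $ l} \<subseteq> D" "\<forall>l\<in>D. l \<noteq> j \<and> (l, j) \<notin> E" for D x
    using that
  proof (induction D arbitrary: x rule: finite_induct)
    case empty
    then have "x = y"
      by (auto simp: vec_eq_iff)
    then show ?case by simp
  next
    case (insert a D)
    have "f j x I = f j (upd x a (y $ a)) I"
      using admissible_upd_nonpredecessor[OF adm] insert.prems(2) by simp
    also have "\<dots> = f j y I"
      using insert.prems by (intro insert.IH) auto
    finally show ?case .
  qed
  have "\<forall>l\<in>{l. x $ l \<noteq> y $ l}. l \<noteq> j \<and> (l, j) \<notin> E"
    using agree by blast
  then show ?thesis
    by (rule step[OF finite subset_refl])
qed

lemma jac_row_eq_if_agree_on_predecessors: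
  assumes adm: "admissible Inp E f"
    and agree: "\<And>l. l = j \<or> (l, j) \<in> E \<Longrightarrow> x $ l = y $ l"
  shows "jac f x I $ j = jac f y I $ j"
proof -
  have "jac f x I $ j $ l = jac f y I $ j $ l" for l
  proof (cases "l = j \<or> (l, j) \<in> E")
    case True
    have "f j (upd x l t) I = f j (upd y l t) I" for t
      using agree by (intro admissible_eq_if_agree_on_predecessors[OF adm]) auto
    then show ?thesis
      using agree[OF True] by (simp add: jac_def)
  next
    case False
    then show ?thesis
      using jac_nonpredecessor[OF adm] by auto
  qed
  then show ?thesis
    by (simp add: vec_eq_iff)
qed

lemma downstream_from_input_if_not_d_node:
  assumes net: "io_network Inp out E" and "l \<notin> d_nodes Inp out E"
  shows "\<exists>i\<in>Inp. downstream E i l"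
proof (cases "l \<in> Inp \<or> l = out")
  case True
  then show ?thesis
    using net unfolding io_network_def by (auto simp: downstream_def)
next
  case False
  then show ?thesis
    using assms(2) unfolding d_nodes_def by auto
qed

lemma d_nodes_predecessor:
  assumes net: "io_network Inp out E"
    and j: "j \<in> d_nodes Inp out E" and "(l, j) \<in> E"
  shows "l \<in> d_nodes Inp out E"
proof (rule ccontr)
  assume "l \<notin> d_nodes Inp out E"
  then obtain i where i: "i \<in> Inp" and "downstream E i l"
    using downstream_from_input_if_not_d_node[OF net] by blast
  from this(2) \<open>(l, j) \<in> E\<close> have "downstream E i j"
    unfolding downstream_def by (rule rtrancl_into_rtrancl)
  with i j show False
    unfolding d_nodes_def by blast
qed

lemma core_node_not_d_node: "j \<in> core_nodes Inp out E \<Longrightarrow> j \<notin> d_nodes Inp out E"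
  unfolding core_nodes_def sigma_nodes_def d_nodes_def by (auto simp: downstream_def)

lemma core_nodes_predecessor:
  assumes net: "io_network Inp out E"
    and j: "j \<in> core_nodes Inp out E" and "(l, j) \<in> E"
  shows "l \<in> core_nodes Inp out E \<union> d_nodes Inp out E"
proof (rule ccontr)
  assume l: "l \<notin> core_nodes Inp out E \<union> d_nodes Inp out E"
  have "downstream E j out"
    using j net unfolding core_nodes_def sigma_nodes_def io_network_def
    by (auto simp: downstream_def)
  with \<open>(l, j) \<in> E\<close> have "downstream E l out"
    unfolding downstream_def by (rule converse_rtrancl_into_rtrancl)
  moreover obtain i where "i \<in> Inp" "downstream E i l"
    using downstream_from_input_if_not_d_node[OF net] l by blast
  ultimately have "l \<in> sigma_nodes Inp out E"
    using l unfolding sigma_nodes_def core_nodes_def by auto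
  with l show False
    unfolding core_nodes_def by blast
qed

lemma linearly_stable_kernel_zero:
  fixes v :: "'n::finite \<Rightarrow> real"
  assumes stable: "linearly_stable S A"
    and kernel: "\<And>j. j \<in> S \<Longrightarrow> (\<Sum>l\<in>S. A $ j $ l * v l) = 0"
    and l: "l \<in> S"
  shows "v l = 0"
proof (rule ccontr)
  assume "v l \<noteq> 0"
  have "sub_eigenvalue S A 0"
    unfolding sub_eigenvalue_def
  proof (intro exI[of _ "\<lambda>l. complex_of_real (v l)"] conjI ballI)
    show "\<exists>i\<in>S. complex_of_real (v i) \<noteq> 0"
      using \<open>v l \<noteq> 0\<close> l by auto
    fix j
    assume "j \<in> S"
    have "(\<Sum>l\<in>S. complex_of_real (A $ j $ l) * complex_of_real (v l)) =
        complex_of_real (\<Sum>l\<in>S. A $ j $ l * v l)"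
      by simp
    then show "(\<Sum>l\<in>S. complex_of_real (A $ j $ l) * complex_of_real (v l)) =
        0 * complex_of_real (v j)"
      using kernel[OF \<open>j \<in> S\<close>] by simp
  qed
  with stable show False
    unfolding linearly_stable_def by fastforce
qed

lemma linearly_stable_nonsingular:
  assumes "linearly_stable UNIV A" and "A *v w = 0"
  shows "w = 0"
proof -
  have "w $ l = 0" for l
  proof (rule linearly_stable_kernel_zero[OF assms(1)])
    show "(\<Sum>l\<in>UNIV. A $ j $ l * w $ l) = 0" for j
      using assms(2) by (simp add: matrix_vector_mult_nth vec_eq_iff)
  qed simp
  then show ?thesis
    by (simp add: vec_eq_iff)
qed

lemma block_lower_triangular_singular:
  fixes A :: "real^'n::finite^'n"
  assumes block: "\<And>j l. j \<in> S \<Longrightarrow> l \<notin> S \<Longrightarrow> A $ j $ l = 0"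
    and v_supp: "\<And>l. l \<notin> S \<Longrightarrow> v $ l = 0" and "v \<noteq> 0"
    and v_kernel: "\<And>j. j \<in> S \<Longrightarrow> (A *v v) $ j = 0"
  shows "\<exists>w. w \<noteq> 0 \<and> A *v w = 0"
proof -
  (* B is the identity on the S-block and agrees with A on the complementary block,
     so B is singular iff that block of A is. *)
  define B :: "real^'n^'n" where
    "B = (\<chi> j l. if j \<in> S \<or> l \<in> S then (if j = l then 1 else 0) else A $ j $ l)"
  have B_on_S: "(B *v w) $ j = w $ j" if "j \<in> S" for w j
  proof -
    have "(B *v w) $ j = (\<Sum>l\<in>UNIV. if l = j then w $ j else 0)"
      unfolding matrix_vector_mult_nth B_def using that by (intro sum.cong) auto
    then show ?thesis
      by simp
  qed
  have B_off_S: "(B *v w) $ j = (A *v w) $ j"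
    if "j \<notin> S" and "\<And>l. l \<in> S \<Longrightarrow> w $ l = 0" for w j
    unfolding matrix_vector_mult_nth B_def using that by (intro sum.cong) auto
  have A_on_S: "(A *v w) $ j = 0" if "j \<in> S" and "\<And>l. l \<in> S \<Longrightarrow> w $ l = 0" for w j
    unfolding matrix_vector_mult_nth using that block by (intro sum.neutral) auto
  show ?thesis
  proof (cases "inj ((*v) B)")
    case True
    define r :: "real^'n" where "r = (\<chi> j. if j \<in> S then 0 else - (A *v v) $ j)"
    obtain w where Bw: "B *v w = r"
      using linear_injective_imp_surjective[OF matrix_vector_mul_linear True] by (metis surjD)
    have w_supp: "w $ l = 0" if "l \<in> S" for l
      using B_on_S[OF that, of w] that by (simp add: Bw r_def)
    have "(A *v (v + w)) $ j = 0" for j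
    proof (cases "j \<in> S")
      case True
      then show ?thesis
        using v_kernel A_on_S[OF True w_supp] by (simp add: matrix_vector_right_distrib)
    next
      case False
      then show ?thesis
        using B_off_S[OF False w_supp] by (simp add: matrix_vector_right_distrib Bw r_def)
    qed
    moreover have "v + w \<noteq> 0"
    proof
      assume "v + w = 0"
      then have sum_zero: "v $ l + w $ l = 0" for l
        by (metis vector_add_component zero_index)
      have "v $ l = 0" for l
        using sum_zero[of l] v_supp[of l] w_supp[of l] by (cases "l \<in> S") simp_all
      with \<open>v \<noteq> 0\<close> show False
        by (simp add: vec_eq_iff)
    qed
    ultimately show ?thesis
      by (metis vec_eq_iff zero_index)
  next
    case False
    then obtain w where w: "w \<noteq> 0" "B *v w = 0"
      using linear_injective_0[OF matrix_vector_mul_linear] by (metis matrix_vector_mult_0_right)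
    have w_supp: "w $ l = 0" if "l \<in> S" for l
      using B_on_S[OF that, of w] w(2) by simp
    have "(A *v w) $ j = 0" for j
      using A_on_S[OF _ w_supp, of j] B_off_S[OF _ w_supp, of j] w(2) by (cases "j \<in> S") auto
    then show ?thesis
      using w(1) by (metis vec_eq_iff zero_index)
  qed
qed

lemma derivative_vanishes_on_d_nodes:
  fixes a :: "'n::finite \<Rightarrow> real"
  assumes net: "io_network Inp out E" and adm: "admissible Inp E f"
    and stable: "linearly_stable UNIV (jac f x I)"
    and rows: "\<And>j. (\<Sum>l\<in>UNIV. jac f x I $ j $ l * a l) + deriv (\<lambda>J. f j x J) I = 0"
    and l: "l \<in> d_nodes Inp out E"
  shows "a l = 0"
proof -
  let ?D = "d_nodes Inp out E" and ?J = "jac f x I"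
  define v where "v = (\<chi> l. if l \<in> ?D then a l else 0)"
  have block: "?J $ j $ k = 0" if "j \<in> ?D" and "k \<notin> ?D" for j k
  proof (rule jac_nonpredecessor[OF adm])
    show "k \<noteq> j" "(k, j) \<notin> E"
      using that d_nodes_predecessor[OF net] by auto
  qed
  have v_supp: "v $ k = 0" if "k \<notin> ?D" for k
    using that by (simp add: v_def)
  have v_kernel: "(?J *v v) $ j = 0" if "j \<in> ?D" for j
  proof -
    have "(?J *v v) $ j = (\<Sum>k\<in>UNIV. ?J $ j $ k * a k)"
      unfolding matrix_vector_mult_nth v_def using block[OF that] by (intro sum.cong) auto
    also have "\<dots> = - deriv (\<lambda>J. f j x J) I"
      using rows[of j] by linarith
    also have "\<dots> = 0"
      using that deriv_parameter_non_input[OF adm] unfolding d_nodes_def by simp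
    finally show ?thesis .
  qed
  have "v = 0"
  proof (rule ccontr)
    assume "v \<noteq> 0"
    then obtain w where "w \<noteq> 0" and "?J *v w = 0"
      using block_lower_triangular_singular[OF block v_supp _ v_kernel] by blast
    with linearly_stable_nonsingular[OF stable] show False
      by blast
  qed
  then have "v $ l = 0"
    by simp
  then show ?thesis
    using l by (simp add: v_def)
qed

lemma core_derivatives_agree:
  fixes a c :: "'n::finite \<Rightarrow> real"
  assumes net: "io_network Inp out E" and adm: "admissible Inp E f"
    and agree: "\<And>k. k \<in> core_nodes Inp out E \<union> d_nodes Inp out E \<Longrightarrow> y $ k = x $ k"
    and stable: "linearly_stable (core_nodes Inp out E) (jac f y I)"
    and rows_a: "\<And>j. j \<in> core_nodes Inp out E \<Longrightarrow>
      (\<Sum>k\<in>UNIV. jac f x I $ j $ k * a k) + b j = 0"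
    and rows_c: "\<And>j. j \<in> core_nodes Inp out E \<Longrightarrow>
      (\<Sum>k\<in>UNIV. jac f x I $ j $ k * c k) + b j = 0"
    and d: "\<And>k. k \<in> d_nodes Inp out E \<Longrightarrow> a k = c k"
    and l: "l \<in> core_nodes Inp out E"
  shows "a l = c l"
proof -
  let ?C = "core_nodes Inp out E" and ?D = "d_nodes Inp out E"
  have "(\<Sum>k\<in>?C. jac f y I $ j $ k * (a k - c k)) = 0" if j: "j \<in> ?C" for j
  proof -
    have preds: "k \<in> ?C \<union> ?D" if "k = j \<or> (k, j) \<in> E" for k
      using that j core_nodes_predecessor[OF net j] by blast
    have row: "jac f y I $ j = jac f x I $ j"
      using agree preds by (intro jac_row_eq_if_agree_on_predecessors[OF adm]) blast
    have outside: "jac f x I $ j $ k * (a k - c k) = 0" if "k \<notin> ?C" for k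
    proof (cases "k \<in> ?D")
      case True
      then show ?thesis
        using d by simp
    next
      case False
      with that preds have "k \<noteq> j" and "(k, j) \<notin> E"
        by auto
      then show ?thesis
        using jac_nonpredecessor[OF adm] by simp
    qed
    have "(\<Sum>k\<in>?C. jac f y I $ j $ k * (a k - c k)) =
        (\<Sum>k\<in>?C. jac f x I $ j $ k * (a k - c k))"
      by (simp only: row)
    also have "\<dots> = (\<Sum>k\<in>UNIV. jac f x I $ j $ k * (a k - c k))"
      by (rule sum.mono_neutral_left) (simp_all add: outside)
    also have "\<dots> = 0"
      unfolding right_diff_distrib sum_subtractf using rows_a[OF j] rows_c[OF j] by linarith
    finally show ?thesis .
  qed
  then have "a l - c l = 0"
    by (rule linearly_stable_kernel_zero[OF stable _ l])
  then show ?thesis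
    by simp
qed

lemma output_in_core_nodes: "out \<in> core_nodes Inp out E"
  by (simp add: core_nodes_def)

lemma core_equilibrium_derivative:
  fixes Xc :: "real \<Rightarrow> real^'n::finite"
  assumes net: "io_network Inp out E" and adm: "admissible Inp E f"
    and V: "open V" "I0 \<in> V"
    and smooth: "\<And>l. l \<in> core_nodes Inp out E \<Longrightarrow> smooth_on V (\<lambda>I. Xc I $ l)"
    and equilibrium: "\<And>I j. I \<in> V \<Longrightarrow> j \<in> core_nodes Inp out E \<Longrightarrow>
      f j (freeze (d_nodes Inp out E) x0 (Xc I)) I = 0"
    and at_I0: "\<And>l. l \<in> core_nodes Inp out E \<Longrightarrow> Xc I0 $ l = x0 $ l"
    and j: "j \<in> core_nodes Inp out E"
  shows "(\<Sum>l\<in>UNIV. jac f x0 I0 $ j $ l *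
      (if l \<in> core_nodes Inp out E then deriv (\<lambda>I. Xc I $ l) I0 else 0)) +
    deriv (\<lambda>J. f j x0 J) I0 = 0"
proof -
  let ?C = "core_nodes Inp out E" and ?D = "d_nodes Inp out E"
  define Y where "Y I = freeze (- ?C) x0 (Xc I)" for I
  have Y': "((\<lambda>I. Y I $ l) has_field_derivative
      (if l \<in> ?C then deriv (\<lambda>I. Xc I $ l) I0 else 0)) (at I0)" for l
  proof (cases "l \<in> ?C")
    case True
    have "(\<lambda>I. Xc I $ l) differentiable (at I0)"
      using smooth_on_imp_differentiable[OF smooth[OF True] V(2)] .
    with True show ?thesis
      by (simp add: Y_def DERIV_deriv_iff_real_differentiable)
  next
    case False
    then show ?thesis
      by (simp add: Y_def)
  qed
  have "Y I0 = x0"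
    using at_I0 by (simp add: Y_def vec_eq_iff)
  moreover have "f j (Y I) I = 0" if "I \<in> V" for I
  proof -
    have "f j (Y I) I = f j (freeze ?D x0 (Xc I)) I"
    proof (rule admissible_eq_if_agree_on_predecessors[OF adm])
      fix k
      assume "k = j \<or> (k, j) \<in> E"
      then have "k \<in> ?C \<union> ?D"
        using j core_nodes_predecessor[OF net j] by blast
      then show "Y I $ k = freeze ?D x0 (Xc I) $ k"
        by (auto simp: Y_def dest: core_node_not_d_node)
    qed
    then show ?thesis
      using equilibrium[OF that j] by simp
  qed
  ultimately show ?thesis
    using equilibrium_curve_derivative[where f = f and j = j, OF admissible_differentiable[OF adm] Y' V]
    by simp
qed

theorem theorem3p2:
  fixes Inp :: "'n::finite set" and out :: 'n and E :: "('n \<times> 'n) set"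
    and f :: "'n \<Rightarrow> real^'n \<Rightarrow> real \<Rightarrow> real"
    and X Xc :: "real \<Rightarrow> real^'n" and U V :: "real set" and I0 :: real
  assumes net: "io_network Inp out E"
    and adm: "admissible Inp E f"
    and U: "open U" "I0 \<in> U"
    and X_smooth: "\<forall>j. smooth_on U (\<lambda>I. X I $ j)"
    and X_eq: "\<forall>I\<in>U. (\<forall>j. f j (X I) I = 0) \<and> linearly_stable UNIV (jac f (X I) I)"
    and V: "open V" "I0 \<in> V"
    and Xc_smooth: "\<forall>j\<in>core_nodes Inp out E. smooth_on V (\<lambda>I. Xc I $ j)"
    and Xc_eq: "\<forall>I\<in>V.
         (\<forall>j\<in>core_nodes Inp out E. f j (freeze (d_nodes Inp out E) (X I0) (Xc I)) I = 0) \<and>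
         linearly_stable (core_nodes Inp out E)
           (jac f (freeze (d_nodes Inp out E) (X I0) (Xc I)) I)"
    and Xc_corr: "\<forall>j\<in>core_nodes Inp out E. Xc I0 $ j = X I0 $ j"
  shows "deriv (\<lambda>I. Xc I $ out) I0 = 0 \<longleftrightarrow> deriv (\<lambda>I. X I $ out) I0 = 0"
proof -
  let ?C = "core_nodes Inp out E" and ?D = "d_nodes Inp out E"
  define a where "a l = deriv (\<lambda>I. X I $ l) I0" for l
  define c where "c l = (if l \<in> ?C then deriv (\<lambda>I. Xc I $ l) I0 else 0)" for l
  have X': "((\<lambda>I. X I $ l) has_field_derivative a l) (at I0)" for l
    using smooth_on_imp_differentiable[OF X_smooth[rule_format] U(2)]
    unfolding a_def by (simp add: DERIV_deriv_iff_real_differentiable)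
  have rows_X: "(\<Sum>l\<in>UNIV. jac f (X I0) I0 $ j $ l * a l) + deriv (\<lambda>J. f j (X I0) J) I0 = 0"
    for j
    using X_eq by (intro equilibrium_curve_derivative[OF admissible_differentiable[OF adm] X' U]) blast
  have rows_Xc: "(\<Sum>l\<in>UNIV. jac f (X I0) I0 $ j $ l * c l) + deriv (\<lambda>J. f j (X I0) J) I0 = 0"
    if "j \<in> ?C" for j
    unfolding c_def using Xc_smooth Xc_eq Xc_corr that
    by (intro core_equilibrium_derivative[OF net adm V]) auto
  have a_D: "a l = 0" if "l \<in> ?D" for l
    using X_eq U by (intro derivative_vanishes_on_d_nodes[OF net adm _ rows_X that]) blast
  have "a out = c out"
  proof (rule core_derivatives_agree[OF net adm _ _ rows_X rows_Xc _ output_in_core_nodes])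
    show "linearly_stable ?C (jac f (freeze ?D (X I0) (Xc I0)) I0)"
      using Xc_eq V by blast
    show "freeze ?D (X I0) (Xc I0) $ k = X I0 $ k" if "k \<in> ?C \<union> ?D" for k
      using that Xc_corr by auto
    show "a k = c k" if "k \<in> ?D" for k
      using a_D[OF that] that by (auto simp: c_def dest: core_node_not_d_node)
  qed
  then show ?thesis
    by (simp add: a_def c_def output_in_core_nodes)
qed

end
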